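(* Let $\mathfrak g$ be a complex simple Lie algebra of rank $2$, with Cartan subalgebra $\mathfrak t$ and root system $\Phi_{\mathfrak g}$, and let $Q=\sum_{i=1}^pA_ix^i$ with $p\ge1$, $A_i\in\mathfrak t$, $A_p\ne0$. Then the pure local wild mapping class group $\Gamma_Q$ is isomorphic to $\mathbb Z$, to $\mathbb Z^2$, or to the pure $\mathfrak g$-braid group $\mathrm{PB}_{\mathfrak g}=\pi_1(\mathfrak t_{\mathrm{reg}})$, where $\mathfrak t_{\mathrm{reg}}=\mathfrak t\setminus\bigcup_{\alpha\in\Phi_{\mathfrak g}}\operatorname{Ker}(\alpha)$.
   Context: For $\alpha\in\Phi_{\mathfrak g}$ let $d_\alpha=\deg_x(\sum_i\alpha(A_i)x^i)$ with $\deg_x(0)=0$. Then $\mathbf B_Q=\{(A_1',\dots,A_p')\in\mathfrak t^p:\deg_x(\sum_i\alpha(A_i')x^i)=d_\alpha\ \forall\alpha\in\Phi_{\mathfrak g}\}$ and $\Gamma_Q=\pi_1(\mathbf B_Q,(A_1,\dots,A_p))$. *)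

theory Defs
  imports "HOL-Analysis.Analysis" "HOL-Algebra.Elementary_Groups"
    "HOL-Computational_Algebra.Polynomial"
begin

definition loops_at :: "'a::topological_space set \<Rightarrow> 'a \<Rightarrow> (real \<Rightarrow> 'a) set" where
  "loops_at S a = {p. path p \<and> path_image p \<subseteq> S \<and> pathstart p = a \<and> pathfinish p = a}"

definition path_class :: "'a::topological_space set \<Rightarrow> (real \<Rightarrow> 'a) \<Rightarrow> (real \<Rightarrow> 'a) set" where
  "path_class S p = {q. homotopic_paths S p q}"

definition fundamental_group :: "'a::topological_space set \<Rightarrow> 'a \<Rightarrow> (real \<Rightarrow> 'a) set monoid" where
  "fundamental_group S a =
     \<lparr>carrier = path_class S ` loops_at S a,
      monoid.mult = (\<lambda>X Y. path_class S ((SOME p. p \<in> X) +++ (SOME q. q \<in> Y))),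
      one = path_class S (\<lambda>t. a)\<rparr>"

text \<open>The Cartan subalgebra t of a complex simple Lie algebra of rank 2 is identified
 with complex * complex via z maps to (alpha1 z, alpha2 z), alpha1, alpha2 simple roots.
 A root is then recorded by its integer coordinates (a,b) w.r.t. the simple roots,
 acting as (z1,z2) maps to a z1 + b z2.  Complex simple Lie algebras of rank 2 are exactly
 those of type A2, B2 (= C2), G2.\<close>

datatype rank2_type = A2 | B2 | G2

definition pos_roots :: "rank2_type \<Rightarrow> (int \<times> int) set" where
  "pos_roots g = (case g of
      A2 \<Rightarrow> {(1,0), (0,1), (1,1)}
    | B2 \<Rightarrow> {(1,0), (0,1), (1,1), (1,2)}
    | G2 \<Rightarrow> {(1,0), (0,1), (1,1), (2,1), (3,1), (3,2)})"

definition roots :: "rank2_type \<Rightarrow> (int \<times> int) set" where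
  "roots g = pos_roots g \<union> (\<lambda>(a,b). (-a,-b)) ` pos_roots g"

definition root_eval :: "int \<times> int \<Rightarrow> complex \<times> complex \<Rightarrow> complex" where
  "root_eval \<alpha> z = of_int (fst \<alpha>) * fst z + of_int (snd \<alpha>) * snd z"

definition t_reg :: "rank2_type \<Rightarrow> (complex \<times> complex) set" where
  "t_reg g = {z. \<forall>\<alpha>\<in>roots g. root_eval \<alpha> z \<noteq> 0}"

text \<open>Tuples (A_1,...,A_p) in t^p are represented as functions nat => t vanishing
 outside {1..p}; the subspace topology of the product topology is that of t^p.\<close>

definition alpha_poly :: "int \<times> int \<Rightarrow> nat \<Rightarrow> (nat \<Rightarrow> complex \<times> complex) \<Rightarrow> complex poly" where
  "alpha_poly \<alpha> p A = (\<Sum>i\<in>{1..p}. monom (root_eval \<alpha> (A i)) i)"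

definition B_Q :: "rank2_type \<Rightarrow> nat \<Rightarrow> (nat \<Rightarrow> complex \<times> complex) \<Rightarrow> (nat \<Rightarrow> complex \<times> complex) set" where
  "B_Q g p A = {A'. (\<forall>i. i \<notin> {1..p} \<longrightarrow> A' i = 0) \<and>
      (\<forall>\<alpha>\<in>roots g. degree (alpha_poly \<alpha> p A') = degree (alpha_poly \<alpha> p A))}"

definition Gamma_Q :: "rank2_type \<Rightarrow> nat \<Rightarrow> (nat \<Rightarrow> complex \<times> complex) \<Rightarrow> _" where
  "Gamma_Q g p A = fundamental_group (B_Q g p A) A"

end

theory Submission
  imports Defs "HOL-Complex_Analysis.Riemann_Mapping"
begin

text \<open>If the leading coefficient \<open>A\<^sub>p\<close> is regular, every \<open>d\<^sub>\<alpha>\<close> equals \<open>p\<close>, so \<open>B\<^sub>Q\<close>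
  consists of the tuples whose leading coefficient lies in \<open>t\<^sub>r\<^sub>e\<^sub>g\<close>; moving the lower
  coefficients linearly to those of \<open>Q\<close> retracts \<open>B\<^sub>Q\<close> onto \<open>t\<^sub>r\<^sub>e\<^sub>g\<close>. Otherwise some
  root \<open>\<beta>\<close> vanishes on \<open>A\<^sub>p\<close>. As \<open>t\<close> has dimension 2, \<open>Ker \<beta>\<close> is then the line
  spanned by \<open>A\<^sub>p\<close>, all roots other than \<open>\<plusminus>\<beta>\<close> are nonzero on the leading coefficient
  of every point of \<open>B\<^sub>Q\<close>, and only the condition on \<open>d\<^sub>\<beta>\<close> is binding: the leading
  coefficient ranges over \<open>Ker \<beta> - 0 \<cong> \<complex>\<^sup>*\<close>, the coefficients of index in
  \<open>(d\<^sub>\<beta>, p)\<close> over \<open>Ker \<beta>\<close>, and, if \<open>d\<^sub>\<beta> > 0\<close>, the coefficient of index \<open>d\<^sub>\<beta>\<close>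
  over \<open>{\<beta> \<noteq> 0} \<simeq> \<complex>\<^sup>*\<close>. Straight-line homotopies retract \<open>B\<^sub>Q\<close> onto
  \<open>\<complex>\<^sup>*\<close> or \<open>\<complex>\<^sup>* \<times> \<complex>\<^sup>*\<close>, whose fundamental groups are computed by winding
  numbers.\<close>

section \<open>Classifying loops\<close>

lemma path_class_eq:
  assumes "homotopic_paths S p q"
  shows "path_class S p = path_class S q"
proof -
  have "homotopic_paths S p r \<longleftrightarrow> homotopic_paths S q r" for r
    by (metis assms homotopic_paths_sym homotopic_paths_trans)
  then show ?thesis
    by (simp add: path_class_def)
qed

lemma path_class_eq_iff:
  assumes "\<gamma> \<in> loops_at S b"
  shows "path_class S \<gamma> = path_class S \<delta> \<longleftrightarrow> homotopic_paths S \<gamma> \<delta>"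
proof
  assume "path_class S \<gamma> = path_class S \<delta>"
  moreover have "\<gamma> \<in> path_class S \<gamma>"
    using assms by (simp add: path_class_def loops_at_def)
  ultimately have "homotopic_paths S \<delta> \<gamma>"
    by (simp add: path_class_def)
  then show "homotopic_paths S \<gamma> \<delta>"
    by (rule homotopic_paths_sym)
qed (rule path_class_eq)

lemma loops_at_homotopic:
  assumes "\<gamma> \<in> loops_at S b" "homotopic_paths S \<gamma> \<delta>"
  shows "\<delta> \<in> loops_at S b"
  using assms(1) homotopic_paths_imp_path[OF assms(2)] homotopic_paths_imp_subset[OF assms(2)]
    homotopic_paths_imp_pathstart[OF assms(2)] homotopic_paths_imp_pathfinish[OF assms(2)]
  unfolding loops_at_def by simp

lemma loops_at_join:
  "\<gamma> \<in> loops_at S b \<Longrightarrow> \<delta> \<in> loops_at S b \<Longrightarrow> \<gamma> +++ \<delta> \<in> loops_at S b"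
  using path_join_imp[of \<gamma> \<delta>] path_image_join_subset[of \<gamma> \<delta>]
  unfolding loops_at_def by auto

lemma loops_at_compose:
  assumes "\<gamma> \<in> loops_at S a" "continuous_on S F" "F \<in> S \<rightarrow> T"
  shows "F \<circ> \<gamma> \<in> loops_at T (F a)"
proof -
  have "path (F \<circ> \<gamma>)"
    using assms continuous_on_subset[OF assms(2)]
    by (intro path_continuous_image) (auto simp: loops_at_def)
  with assms show ?thesis
    by (auto simp: loops_at_def path_image_compose pathstart_compose pathfinish_compose)
qed

lemma homotopic_some_in_path_class:
  assumes "\<gamma> \<in> loops_at S b"
  shows "homotopic_paths S \<gamma> (SOME q. q \<in> path_class S \<gamma>)"
proof -
  have "\<gamma> \<in> path_class S \<gamma>"
    using assms by (simp add: path_class_def loops_at_def)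
  then have "(SOME q. q \<in> path_class S \<gamma>) \<in> path_class S \<gamma>"
    by (rule someI[where P = "\<lambda>q. q \<in> path_class S \<gamma>"])
  then show ?thesis
    by (simp add: path_class_def)
qed

lemma carrier_fundamental_group:
  "carrier (fundamental_group S b) = path_class S ` loops_at S b"
  by (simp add: fundamental_group_def)

lemma mult_fundamental_group:
  assumes "\<gamma> \<in> loops_at S b" "\<delta> \<in> loops_at S b"
  shows "path_class S \<gamma> \<otimes>\<^bsub>fundamental_group S b\<^esub> path_class S \<delta> = path_class S (\<gamma> +++ \<delta>)"
proof -
  have "pathfinish \<gamma> = pathstart \<delta>"
    using assms by (simp add: loops_at_def)
  with assms have "path_class S (\<gamma> +++ \<delta>)
      = path_class S ((SOME q. q \<in> path_class S \<gamma>) +++ (SOME q. q \<in> path_class S \<delta>))"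
    by (intro path_class_eq homotopic_paths_join homotopic_some_in_path_class)
  then show ?thesis
    by (simp add: fundamental_group_def)
qed

definition classifies_loops ::
    "'a::topological_space set \<Rightarrow> 'a \<Rightarrow> ((real \<Rightarrow> 'a) \<Rightarrow> 'g) \<Rightarrow> ('g, 'm) monoid_scheme \<Rightarrow> bool" where
  "classifies_loops S b \<Phi> H \<longleftrightarrow>
     \<Phi> ` loops_at S b = carrier H \<and>
     (\<forall>\<gamma>\<in>loops_at S b. \<forall>\<delta>\<in>loops_at S b.
        (homotopic_paths S \<gamma> \<delta> \<longleftrightarrow> \<Phi> \<gamma> = \<Phi> \<delta>) \<and> \<Phi> (\<gamma> +++ \<delta>) = \<Phi> \<gamma> \<otimes>\<^bsub>H\<^esub> \<Phi> \<delta>)"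

lemma classifies_loopsI:
  assumes "\<Phi> ` loops_at S b = carrier H"
    and "\<And>\<gamma> \<delta>. \<gamma> \<in> loops_at S b \<Longrightarrow> \<delta> \<in> loops_at S b \<Longrightarrow> homotopic_paths S \<gamma> \<delta> \<longleftrightarrow> \<Phi> \<gamma> = \<Phi> \<delta>"
    and "\<And>\<gamma> \<delta>. \<gamma> \<in> loops_at S b \<Longrightarrow> \<delta> \<in> loops_at S b \<Longrightarrow> \<Phi> (\<gamma> +++ \<delta>) = \<Phi> \<gamma> \<otimes>\<^bsub>H\<^esub> \<Phi> \<delta>"
  shows "classifies_loops S b \<Phi> H"
  using assms by (simp add: classifies_loops_def)

theorem fundamental_group_iso_if_classifies:
  assumes "classifies_loops S b \<Phi> H"
  shows "fundamental_group S b \<cong> H"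
proof -
  note cl = assms[unfolded classifies_loops_def]
  define f where "f X = \<Phi> (SOME q. q \<in> X)" for X
  have f: "f (path_class S \<gamma>) = \<Phi> \<gamma>" if "\<gamma> \<in> loops_at S b" for \<gamma>
    using that cl homotopic_some_in_path_class[OF that]
      loops_at_homotopic[OF that homotopic_some_in_path_class[OF that]]
    by (simp add: f_def)
  have "f \<in> hom (fundamental_group S b) H"
  proof (rule homI)
    fix X Y assume "X \<in> carrier (fundamental_group S b)" "Y \<in> carrier (fundamental_group S b)"
    then obtain \<gamma> \<delta> where "\<gamma> \<in> loops_at S b" "\<delta> \<in> loops_at S b"
      and "X = path_class S \<gamma>" "Y = path_class S \<delta>"
      by (auto simp: carrier_fundamental_group)
    then show "f (X \<otimes>\<^bsub>fundamental_group S b\<^esub> Y) = f X \<otimes>\<^bsub>H\<^esub> f Y"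
      using cl by (simp add: mult_fundamental_group f loops_at_join)
  qed (use cl f in \<open>auto simp: carrier_fundamental_group\<close>)
  moreover have "bij_betw f (carrier (fundamental_group S b)) (carrier H)"
  proof (rule bij_betw_imageI)
    show "inj_on f (carrier (fundamental_group S b))"
      using cl by (auto simp: inj_on_def carrier_fundamental_group f path_class_eq_iff)
    show "f ` carrier (fundamental_group S b) = carrier H"
      using cl by (simp add: carrier_fundamental_group image_image f cong: image_cong)
  qed
  ultimately show ?thesis
    by (auto simp: is_iso_def iso_def)
qed

lemma classifies_loops_path_class:
  "classifies_loops S b (path_class S) (fundamental_group S b)"
proof (rule classifies_loopsI)
  show "path_class S ` loops_at S b = carrier (fundamental_group S b)"
    by (simp add: carrier_fundamental_group)
qed (simp_all add: path_class_eq_iff mult_fundamental_group)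

lemma homotopic_paths_loop_compose:
  assumes "homotopic_with_canon (\<lambda>k. k a = a) S S id r" "\<gamma> \<in> loops_at S a"
  shows "homotopic_paths S \<gamma> (r \<circ> \<gamma>)"
proof -
  have "homotopic_with_canon (\<lambda>k. pathstart k = pathstart \<gamma> \<and> pathfinish k = pathfinish \<gamma>)
          {0..1} S (id \<circ> \<gamma>) (r \<circ> \<gamma>)"
  proof (rule homotopic_with_compose_continuous_right[OF homotopic_with_mono[OF assms(1)]])
    show "continuous_on {0..1} \<gamma>" "\<gamma> \<in> {0..1} \<rightarrow> S"
      using assms(2) by (auto simp: loops_at_def path_def path_image_def)
  qed (use assms(2) in \<open>auto simp: loops_at_def pathstart_compose pathfinish_compose\<close>)
  then show ?thesis
    by (simp add: homotopic_paths_def)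
qed

lemma classifies_loops_retraction:
  assumes cl: "classifies_loops T (F a) \<Psi> H"
    and contF: "continuous_on S F" and F: "F \<in> S \<rightarrow> T"
    and contG: "continuous_on T G" and G: "G \<in> T \<rightarrow> S"
    and FG: "\<And>y. y \<in> T \<Longrightarrow> F (G y) = y"
    and hom: "homotopic_with_canon (\<lambda>k. k a = a) S S id (G \<circ> F)"
  shows "classifies_loops S a (\<lambda>\<gamma>. \<Psi> (F \<circ> \<gamma>)) H"
proof -
  note cl = cl[unfolded classifies_loops_def]
  have GFa: "G (F a) = a"
    using homotopic_with_imp_property[OF hom] by simp
  have F_loop: "F \<circ> \<gamma> \<in> loops_at T (F a)" if "\<gamma> \<in> loops_at S a" for \<gamma>
    using loops_at_compose[OF that contF F] .
  have G_loop: "G \<circ> \<delta> \<in> loops_at S a" if "\<delta> \<in> loops_at T (F a)" for \<delta>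
    using loops_at_compose[OF that contG G] by (simp add: GFa)
  have FG_loop: "homotopic_paths T (F \<circ> (G \<circ> \<delta>)) \<delta>" if "\<delta> \<in> loops_at T (F a)" for \<delta>
    using that F_loop[OF G_loop[OF that]] FG
    by (intro homotopic_paths_eq) (auto simp: loops_at_def path_image_def image_subset_iff)
  have "homotopic_paths S \<gamma> \<delta> \<longleftrightarrow> homotopic_paths T (F \<circ> \<gamma>) (F \<circ> \<delta>)"
    if "\<gamma> \<in> loops_at S a" "\<delta> \<in> loops_at S a" for \<gamma> \<delta>
  proof
    assume "homotopic_paths T (F \<circ> \<gamma>) (F \<circ> \<delta>)"
    then have "homotopic_paths S (G \<circ> (F \<circ> \<gamma>)) (G \<circ> (F \<circ> \<delta>))"
      by (rule homotopic_paths_continuous_image[OF _ contG G])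
    then have "homotopic_paths S (G \<circ> F \<circ> \<gamma>) (G \<circ> F \<circ> \<delta>)"
      by (simp add: comp_assoc)
    then show "homotopic_paths S \<gamma> \<delta>"
      using homotopic_paths_loop_compose[OF hom] that
      by (meson homotopic_paths_sym homotopic_paths_trans)
  qed (use homotopic_paths_continuous_image[OF _ contF F] in blast)
  moreover have "(\<lambda>\<gamma>. \<Psi> (F \<circ> \<gamma>)) ` loops_at S a = carrier H"
  proof
    show "carrier H \<subseteq> (\<lambda>\<gamma>. \<Psi> (F \<circ> \<gamma>)) ` loops_at S a"
    proof
      fix h assume "h \<in> carrier H"
      then obtain \<delta> where \<delta>: "\<delta> \<in> loops_at T (F a)" "h = \<Psi> \<delta>"
        using cl by blast
      then have "\<Psi> (F \<circ> (G \<circ> \<delta>)) = h"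
        using cl FG_loop[OF \<delta>(1)] F_loop[OF G_loop[OF \<delta>(1)]] by blast
      then show "h \<in> (\<lambda>\<gamma>. \<Psi> (F \<circ> \<gamma>)) ` loops_at S a"
        using G_loop[OF \<delta>(1)] by blast
    qed
  qed (use cl F_loop in blast)
  ultimately show ?thesis
    using cl F_loop by (auto simp: classifies_loops_def path_compose_join)
qed

lemma homotopic_with_pointwise_segment:
  fixes S :: "('i \<Rightarrow> 'b::real_normed_vector) set"
  assumes contr: "continuous_on S r" and ra: "r a = a"
    and seg: "\<And>x s. x \<in> S \<Longrightarrow> s \<in> {0..1} \<Longrightarrow> (\<lambda>i. (1 - s) *\<^sub>R x i + s *\<^sub>R r x i) \<in> S"
  shows "homotopic_with_canon (\<lambda>k. k a = a) S S id r"
proof -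
  let ?h = "\<lambda>y i. (1 - fst y) *\<^sub>R snd y i + fst y *\<^sub>R r (snd y) i"
  have "continuous_on ({0..1} \<times> S) (\<lambda>y. snd y i)" for i
    by (rule continuous_on_product_then_coordinatewise) (intro continuous_on_snd continuous_on_id)
  moreover have "continuous_on ({0..1} \<times> S) (\<lambda>y. r (snd y) i)" for i
    by (rule continuous_on_product_then_coordinatewise, rule continuous_on_compose2[OF contr])
      (auto intro: continuous_on_snd continuous_on_id)
  ultimately have "continuous_on ({0..1} \<times> S) ?h"
    by (intro continuous_on_coordinatewise_then_product continuous_intros)
  moreover have "?h \<in> {0..1} \<times> S \<rightarrow> S"
    using seg by force
  moreover have "(\<lambda>x. ?h (t, x)) a = a" for t
    by (simp add: ra fun_eq_iff algebra_simps)
  ultimately show ?thesis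
    unfolding homotopic_with_def by (intro exI[of _ ?h]) auto
qed

lemma fundamental_group_iso_fun_retraction:
  fixes S :: "('i \<Rightarrow> 'b::real_normed_vector) set"
  assumes "classifies_loops T (F a) \<Psi> H"
    and contF: "continuous_on S F" and F: "F \<in> S \<rightarrow> T"
    and contG: "continuous_on T G" and G: "G \<in> T \<rightarrow> S"
    and "\<And>y. y \<in> T \<Longrightarrow> F (G y) = y" and "G (F a) = a"
    and "\<And>x s. x \<in> S \<Longrightarrow> s \<in> {0..1} \<Longrightarrow> (\<lambda>i. (1 - s) *\<^sub>R x i + s *\<^sub>R G (F x) i) \<in> S"
  shows "fundamental_group S a \<cong> H"
proof (rule fundamental_group_iso_if_classifies, rule classifies_loops_retraction)
  have "continuous_on S (G \<circ> F)"
    using continuous_on_compose[OF contF continuous_on_subset[OF contG]] F by blast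
  then show "homotopic_with_canon (\<lambda>k. k a = a) S S id (G \<circ> F)"
    using assms(7,8) by (intro homotopic_with_pointwise_segment) simp_all
qed (use assms in auto)

lemma homotopic_paths_Pair:
  assumes "homotopic_paths A p1 q1" "homotopic_paths B p2 q2"
  shows "homotopic_paths (A \<times> B) (\<lambda>t. (p1 t, p2 t)) (\<lambda>t. (q1 t, q2 t))"
proof -
  obtain h1 where h1: "continuous_on ({0..1} \<times> {0..1}) h1" "h1 \<in> ({0..1} \<times> {0..1}) \<rightarrow> A"
    "\<forall>x\<in>{0..1}. h1 (0, x) = p1 x" "\<forall>x\<in>{0..1}. h1 (1, x) = q1 x"
    "\<forall>t\<in>{0..1::real}. pathstart (h1 \<circ> Pair t) = pathstart p1 \<and> pathfinish (h1 \<circ> Pair t) = pathfinish p1"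
    using assms(1) unfolding homotopic_paths by blast
  obtain h2 where h2: "continuous_on ({0..1} \<times> {0..1}) h2" "h2 \<in> ({0..1} \<times> {0..1}) \<rightarrow> B"
    "\<forall>x\<in>{0..1}. h2 (0, x) = p2 x" "\<forall>x\<in>{0..1}. h2 (1, x) = q2 x"
    "\<forall>t\<in>{0..1::real}. pathstart (h2 \<circ> Pair t) = pathstart p2 \<and> pathfinish (h2 \<circ> Pair t) = pathfinish p2"
    using assms(2) unfolding homotopic_paths by blast
  have "continuous_on ({0..1} \<times> {0..1}) (\<lambda>y. (h1 y, h2 y))"
    using h1(1) h2(1) by (rule continuous_on_Pair)
  with h1 h2 show ?thesis
    unfolding homotopic_paths by (intro exI[of _ "\<lambda>y. (h1 y, h2 y)"]) (auto simp: pathstart_def pathfinish_def)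
qed

lemma homotopic_paths_Times_iff:
  "homotopic_paths (A \<times> B) \<gamma> \<delta> \<longleftrightarrow>
    homotopic_paths A (fst \<circ> \<gamma>) (fst \<circ> \<delta>) \<and> homotopic_paths B (snd \<circ> \<gamma>) (snd \<circ> \<delta>)"
proof
  assume "homotopic_paths A (fst \<circ> \<gamma>) (fst \<circ> \<delta>) \<and> homotopic_paths B (snd \<circ> \<gamma>) (snd \<circ> \<delta>)"
  then show "homotopic_paths (A \<times> B) \<gamma> \<delta>"
    using homotopic_paths_Pair by fastforce
qed (auto intro!: homotopic_paths_continuous_image continuous_intros)

lemma loops_at_Times_iff:
  "\<gamma> \<in> loops_at (A \<times> B) (a, b) \<longleftrightarrow> fst \<circ> \<gamma> \<in> loops_at A a \<and> snd \<circ> \<gamma> \<in> loops_at B b"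
proof -
  have "path \<gamma> \<longleftrightarrow> path (fst \<circ> \<gamma>) \<and> path (snd \<circ> \<gamma>)"
  proof
    assume "path (fst \<circ> \<gamma>) \<and> path (snd \<circ> \<gamma>)"
    then have "continuous_on {0..1} (\<lambda>t. (fst (\<gamma> t), snd (\<gamma> t)))"
      by (intro continuous_on_Pair) (simp_all add: path_def o_def)
    then show "path \<gamma>"
      by (simp add: path_def)
  qed (simp add: path_def o_def continuous_on_fst continuous_on_snd)
  then show ?thesis
    by (auto simp: loops_at_def path_image_def pathstart_def pathfinish_def image_subset_iff
        mem_Times_iff prod_eq_iff)
qed

lemma loops_at_Times:
  "(\<lambda>\<gamma>. (fst \<circ> \<gamma>, snd \<circ> \<gamma>)) ` loops_at (A \<times> B) (a, b) = loops_at A a \<times> loops_at B b"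
proof
  show "loops_at A a \<times> loops_at B b \<subseteq> (\<lambda>\<gamma>. (fst \<circ> \<gamma>, snd \<circ> \<gamma>)) ` loops_at (A \<times> B) (a, b)"
  proof clarify
    fix \<gamma>1 \<gamma>2 assume "\<gamma>1 \<in> loops_at A a" "\<gamma>2 \<in> loops_at B b"
    then have "(\<lambda>t. (\<gamma>1 t, \<gamma>2 t)) \<in> loops_at (A \<times> B) (a, b)"
      by (simp add: loops_at_Times_iff o_def)
    then show "(\<gamma>1, \<gamma>2) \<in> (\<lambda>\<gamma>. (fst \<circ> \<gamma>, snd \<circ> \<gamma>)) ` loops_at (A \<times> B) (a, b)"
      by (rule rev_image_eqI) (simp add: o_def)
  qed
qed (auto simp: loops_at_Times_iff)

lemma classifies_loops_Times:
  assumes clA: "classifies_loops A a \<Phi> H" and clB: "classifies_loops B b \<Psi> K"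
  shows "classifies_loops (A \<times> B) (a, b) (\<lambda>\<gamma>. (\<Phi> (fst \<circ> \<gamma>), \<Psi> (snd \<circ> \<gamma>))) (H \<times>\<times> K)"
proof (rule classifies_loopsI)
  note clA = clA[unfolded classifies_loops_def] and clB = clB[unfolded classifies_loops_def]
  have "(\<lambda>\<gamma>. (\<Phi> (fst \<circ> \<gamma>), \<Psi> (snd \<circ> \<gamma>))) ` loops_at (A \<times> B) (a, b) =
      map_prod \<Phi> \<Psi> ` ((\<lambda>\<gamma>. (fst \<circ> \<gamma>, snd \<circ> \<gamma>)) ` loops_at (A \<times> B) (a, b))"
    by (simp add: image_image)
  also have "\<dots> = carrier (H \<times>\<times> K)"
    unfolding loops_at_Times using clA clB by (simp add: map_prod_surj_on)
  finally show "(\<lambda>\<gamma>. (\<Phi> (fst \<circ> \<gamma>), \<Psi> (snd \<circ> \<gamma>))) ` loops_at (A \<times> B) (a, b) = carrier (H \<times>\<times> K)" .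
  fix \<gamma> \<delta> assume "\<gamma> \<in> loops_at (A \<times> B) (a, b)" "\<delta> \<in> loops_at (A \<times> B) (a, b)"
  then have "fst \<circ> \<gamma> \<in> loops_at A a" "snd \<circ> \<gamma> \<in> loops_at B b"
      "fst \<circ> \<delta> \<in> loops_at A a" "snd \<circ> \<delta> \<in> loops_at B b"
    by (simp_all add: loops_at_Times_iff)
  then show "homotopic_paths (A \<times> B) \<gamma> \<delta> \<longleftrightarrow>
        (\<Phi> (fst \<circ> \<gamma>), \<Psi> (snd \<circ> \<gamma>)) = (\<Phi> (fst \<circ> \<delta>), \<Psi> (snd \<circ> \<delta>))"
      "(\<Phi> (fst \<circ> (\<gamma> +++ \<delta>)), \<Psi> (snd \<circ> (\<gamma> +++ \<delta>))) =
        (\<Phi> (fst \<circ> \<gamma>), \<Psi> (snd \<circ> \<gamma>)) \<otimes>\<^bsub>H \<times>\<times> K\<^esub> (\<Phi> (fst \<circ> \<delta>), \<Psi> (snd \<circ> \<delta>))"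
    using clA clB by (simp_all add: homotopic_paths_Times_iff path_compose_join)
qed

section \<open>The punctured plane\<close>

definition int_winding_number :: "(real \<Rightarrow> complex) \<Rightarrow> int" where
  "int_winding_number \<gamma> = \<lfloor>Re (winding_number \<gamma> 0)\<rfloor>"

lemma loops_at_punctured_plane:
  "\<gamma> \<in> loops_at (-{0}) b \<longleftrightarrow> path \<gamma> \<and> 0 \<notin> path_image \<gamma> \<and> pathstart \<gamma> = b \<and> pathfinish \<gamma> = b"
  unfolding loops_at_def by blast

lemma of_int_int_winding_number:
  assumes "\<gamma> \<in> loops_at (-{0}) b"
  shows "of_int (int_winding_number \<gamma>) = winding_number \<gamma> 0"
proof -
  have "winding_number \<gamma> 0 \<in> \<int>"
    using assms by (intro integer_winding_number) (auto simp: loops_at_punctured_plane)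
  then show ?thesis
    by (auto simp: int_winding_number_def elim: Ints_cases)
qed

lemma int_winding_number_eq_iff:
  assumes "\<gamma> \<in> loops_at (-{0}) b" "\<delta> \<in> loops_at (-{0}) b"
  shows "int_winding_number \<gamma> = int_winding_number \<delta> \<longleftrightarrow> winding_number \<gamma> 0 = winding_number \<delta> 0"
  by (metis assms of_int_int_winding_number of_int_eq_iff)

lemma exists_loop_with_winding_number_nat:
  "\<exists>\<gamma>\<in>loops_at (-{0}) 1. winding_number \<gamma> 0 = of_nat n"
proof (induction n)
  case 0
  have "linepath 1 1 \<in> loops_at (-{0::complex}) 1"
    by (simp add: loops_at_punctured_plane)
  moreover have "winding_number (linepath 1 1) 0 = 0"
    by (rule winding_number_trivial) simp
  ultimately show ?case
    by (metis of_nat_0)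
next
  case (Suc n)
  then obtain \<gamma> where \<gamma>: "\<gamma> \<in> loops_at (-{0}) 1" "winding_number \<gamma> 0 = of_nat n"
    by blast
  have circle: "circlepath 0 1 \<in> loops_at (-{0}) 1"
    by (simp add: loops_at_punctured_plane)
  have "winding_number (\<gamma> +++ circlepath 0 1) 0 = winding_number \<gamma> 0 + winding_number (circlepath 0 1) 0"
    using \<gamma>(1) circle by (intro winding_number_join) (auto simp: loops_at_punctured_plane)
  also have "\<dots> = of_nat (Suc n)"
    using \<gamma>(2) winding_number_circlepath_centre[of 1 0] by simp
  finally show ?case
    using loops_at_join[OF \<gamma>(1) circle] by blast
qed

lemma exists_loop_with_int_winding_number:
  "\<exists>\<gamma>\<in>loops_at (-{0}) 1. int_winding_number \<gamma> = k"
proof (cases "k \<ge> 0")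
  case True
  obtain \<gamma> where \<gamma>: "\<gamma> \<in> loops_at (-{0}) 1" "winding_number \<gamma> 0 = of_nat (nat k)"
    using exists_loop_with_winding_number_nat by blast
  then have "of_int (int_winding_number \<gamma>) = (of_int k :: complex)"
    using True by (simp add: of_int_int_winding_number)
  then show ?thesis
    using \<gamma>(1) of_int_eq_iff by blast
next
  case False
  obtain \<gamma> where \<gamma>: "\<gamma> \<in> loops_at (-{0}) 1" "winding_number \<gamma> 0 = of_nat (nat (- k))"
    using exists_loop_with_winding_number_nat by blast
  then have rev: "reversepath \<gamma> \<in> loops_at (-{0}) 1"
    by (simp add: loops_at_punctured_plane)
  have "winding_number (reversepath \<gamma>) 0 = - winding_number \<gamma> 0"
    using \<gamma>(1) by (intro winding_number_reversepath) (auto simp: loops_at_punctured_plane)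
  then have "of_int (int_winding_number (reversepath \<gamma>)) = (of_int k :: complex)"
    using \<gamma>(2) False by (simp add: of_int_int_winding_number[OF rev])
  then show ?thesis
    using rev of_int_eq_iff by blast
qed

theorem classifies_loops_int_winding_number:
  "classifies_loops (-{0}) 1 int_winding_number integer_group"
proof (rule classifies_loopsI)
  have "k \<in> int_winding_number ` loops_at (-{0}) 1" for k
    using exists_loop_with_int_winding_number[of k] by (metis image_eqI)
  then show "int_winding_number ` loops_at (-{0}) 1 = carrier integer_group"
    by auto
next
  fix \<gamma> \<delta> :: "real \<Rightarrow> complex"
  assume loops: "\<gamma> \<in> loops_at (-{0}) 1" "\<delta> \<in> loops_at (-{0}) 1"
  then show "homotopic_paths (-{0}) \<gamma> \<delta> \<longleftrightarrow> int_winding_number \<gamma> = int_winding_number \<delta>"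
    by (simp add: int_winding_number_eq_iff winding_number_homotopic_paths_eq loops_at_punctured_plane)
  have "winding_number (\<gamma> +++ \<delta>) 0 = winding_number \<gamma> 0 + winding_number \<delta> 0"
    using loops by (intro winding_number_join) (auto simp: loops_at_punctured_plane)
  then have "of_int (int_winding_number (\<gamma> +++ \<delta>)) =
      (of_int (int_winding_number \<gamma> + int_winding_number \<delta>) :: complex)"
    using loops loops_at_join[OF loops] by (simp add: of_int_int_winding_number)
  then show "int_winding_number (\<gamma> +++ \<delta>) = int_winding_number \<gamma> \<otimes>\<^bsub>integer_group\<^esub> int_winding_number \<delta>"
    by (simp only: of_int_eq_iff mult_integer_group)
qed

section \<open>Roots of rank 2 and the polynomials \<open>\<alpha>(Q)\<close>\<close>

definition cscale :: "complex \<Rightarrow> complex \<times> complex \<Rightarrow> complex \<times> complex" where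
  "cscale w z = (w * fst z, w * snd z)"

lemma cscale_1 [simp]: "cscale 1 z = z"
  by (simp add: cscale_def)

lemma cscale_eq_0_iff: "cscale w z = 0 \<longleftrightarrow> w = 0 \<or> z = 0"
  by (cases z) (auto simp: cscale_def zero_prod_def)

lemma continuous_on_cscale [continuous_intros]:
  "continuous_on T f \<Longrightarrow> continuous_on T (\<lambda>y. cscale (f y) z)"
  unfolding cscale_def by (intro continuous_intros)

lemma root_eval_0 [simp]: "root_eval \<alpha> 0 = 0"
  by (simp add: root_eval_def)

lemma root_eval_add: "root_eval \<alpha> (x + y) = root_eval \<alpha> x + root_eval \<alpha> y"
  by (simp add: root_eval_def algebra_simps)

lemma root_eval_scaleR: "root_eval \<alpha> (c *\<^sub>R x) = of_real c * root_eval \<alpha> x"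
  by (simp add: root_eval_def scaleR_conv_of_real algebra_simps)

lemma root_eval_cscale: "root_eval \<alpha> (cscale w x) = w * root_eval \<alpha> x"
  by (simp add: root_eval_def cscale_def algebra_simps)

lemma root_eval_diff: "root_eval \<alpha> (x - y) = root_eval \<alpha> x - root_eval \<alpha> y"
  by (simp add: root_eval_def algebra_simps)

lemma root_eval_uminus: "root_eval (- \<alpha>) x = - root_eval \<alpha> x"
  by (simp add: root_eval_def algebra_simps)

lemma continuous_on_root_eval_coordinate [continuous_intros]:
  "continuous_on U (\<lambda>X :: 'i \<Rightarrow> complex \<times> complex. root_eval \<alpha> (X i))"
proof -
  have "continuous_on U (\<lambda>X :: 'i \<Rightarrow> complex \<times> complex. X i)"
    by (rule continuous_on_subset[OF continuous_on_product_coordinates]) simp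
  then show ?thesis
    unfolding root_eval_def by (intro continuous_intros)
qed

lemma continuous_on_fun_upd [continuous_intros]:
  assumes "continuous_on T h" "continuous_on T f"
  shows "continuous_on T (\<lambda>y. (h y)(i := f y))"
proof (rule continuous_on_coordinatewise_then_product)
  fix j
  show "continuous_on T (\<lambda>y. ((h y)(i := f y)) j)"
    using assms continuous_on_product_then_coordinatewise[OF assms(1), of j] by (cases "j = i") simp_all
qed

lemma root_eval_independent_eq_0:
  assumes "fst \<alpha> * snd \<beta> \<noteq> snd \<alpha> * fst \<beta>" "root_eval \<alpha> z = 0" "root_eval \<beta> z = 0"
  shows "z = 0"
proof -
  let ?det = "of_int (fst \<alpha> * snd \<beta> - snd \<alpha> * fst \<beta>) :: complex"
  have "?det * fst z = of_int (snd \<beta>) * root_eval \<alpha> z - of_int (snd \<alpha>) * root_eval \<beta> z"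
    "?det * snd z = of_int (fst \<alpha>) * root_eval \<beta> z - of_int (fst \<beta>) * root_eval \<alpha> z"
    by (simp_all add: root_eval_def algebra_simps)
  moreover have "?det \<noteq> 0"
    using assms(1) by (simp only: of_int_eq_0_iff)
  ultimately show ?thesis
    using assms(2,3) by (simp add: prod_eq_iff)
qed

lemma root_eval_independent_nonzero:
  "fst \<alpha> * snd \<beta> \<noteq> snd \<alpha> * fst \<beta> \<Longrightarrow> z \<noteq> 0 \<Longrightarrow> root_eval \<beta> z = 0 \<Longrightarrow> root_eval \<alpha> z \<noteq> 0"
  using root_eval_independent_eq_0 by blast

definition root_perp :: "int \<times> int \<Rightarrow> int \<times> int" where
  "root_perp \<beta> = (snd \<beta>, - fst \<beta>)"

lemma root_perp_kernel_nonzero: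
  assumes "\<beta> \<noteq> 0" "root_eval \<beta> y = 0" "y \<noteq> 0"
  shows "root_eval (root_perp \<beta>) y \<noteq> 0"
proof -
  have "fst \<beta> * snd (root_perp \<beta>) - snd \<beta> * fst (root_perp \<beta>) =
      - (fst \<beta> * fst \<beta> + snd \<beta> * snd \<beta>)"
    by (simp add: root_perp_def)
  moreover have "fst \<beta> * fst \<beta> + snd \<beta> * snd \<beta> \<noteq> 0"
    using assms(1) by (simp add: prod_eq_iff)
  ultimately have "fst \<beta> * snd (root_perp \<beta>) \<noteq> snd \<beta> * fst (root_perp \<beta>)"
    by (metis diff_self neg_equal_0_iff_equal)
  then show ?thesis
    using root_eval_independent_eq_0 assms(2,3) by blast
qed

lemma root_kernel_eq_cscale:
  assumes "\<beta> \<noteq> 0" "root_eval \<beta> x = 0" "root_eval \<beta> y = 0" "y \<noteq> 0"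
  shows "x = cscale (root_eval (root_perp \<beta>) x / root_eval (root_perp \<beta>) y) y"
proof -
  let ?z = "x - cscale (root_eval (root_perp \<beta>) x / root_eval (root_perp \<beta>) y) y"
  have "root_eval \<beta> ?z = 0" "root_eval (root_perp \<beta>) ?z = 0"
    using assms root_perp_kernel_nonzero[OF assms(1,3,4)]
    by (simp_all add: root_eval_diff root_eval_cscale)
  then show ?thesis
    using root_perp_kernel_nonzero[OF assms(1), of ?z] by auto
qed

lemma roots_nonzero: "\<alpha> \<in> roots g \<Longrightarrow> \<alpha> \<noteq> 0"
  by (cases g) (auto simp: roots_def pos_roots_def zero_prod_def)

lemma roots_proportional_cases:
  assumes "\<alpha> \<in> roots g" "\<beta> \<in> roots g"
  shows "\<alpha> = \<beta> \<or> \<alpha> = - \<beta> \<or> fst \<alpha> * snd \<beta> \<noteq> snd \<alpha> * fst \<beta>"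
  using assms by (cases g) (auto simp: roots_def pos_roots_def)

lemma roots_ex_independent:
  "\<beta> \<in> roots g \<Longrightarrow> \<exists>\<alpha>\<in>roots g. fst \<alpha> * snd \<beta> \<noteq> snd \<alpha> * fst \<beta>"
  by (cases g) (auto simp: roots_def pos_roots_def)

lemma degree_eq_iff_coeff:
  "degree q = d \<longleftrightarrow> (d = 0 \<or> coeff q d \<noteq> 0) \<and> (\<forall>n>d. coeff q n = 0)"
proof
  assume deg: "degree q = d"
  have "coeff q d \<noteq> 0" if "d \<noteq> 0"
    using that deg leading_coeff_neq_0[of q] by force
  then show "(d = 0 \<or> coeff q d \<noteq> 0) \<and> (\<forall>n>d. coeff q n = 0)"
    using deg coeff_eq_0 by auto
next
  assume *: "(d = 0 \<or> coeff q d \<noteq> 0) \<and> (\<forall>n>d. coeff q n = 0)"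
  then have "degree q \<le> d"
    by (intro degree_le) simp
  with * show "degree q = d"
    using le_degree[of q d] by (cases "d = 0") auto
qed

lemma coeff_alpha_poly:
  "coeff (alpha_poly \<alpha> p X) n = (if n \<in> {1..p} then root_eval \<alpha> (X n) else 0)"
  by (simp add: alpha_poly_def coeff_sum coeff_monom)

lemma alpha_poly_uminus: "alpha_poly (- \<alpha>) p X = - alpha_poly \<alpha> p X"
  by (simp add: poly_eq_iff coeff_alpha_poly root_eval_uminus)

lemma degree_alpha_poly_le: "degree (alpha_poly \<alpha> p X) \<le> p"
  by (rule degree_le) (simp add: coeff_alpha_poly)

lemma degree_alpha_poly_eq_iff:
  assumes "d \<le> p"
  shows "degree (alpha_poly \<alpha> p X) = d \<longleftrightarrow>
    (d = 0 \<or> root_eval \<alpha> (X d) \<noteq> 0) \<and> (\<forall>i. d < i \<and> i \<le> p \<longrightarrow> root_eval \<alpha> (X i) = 0)"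
  using assms unfolding degree_eq_iff_coeff coeff_alpha_poly by auto

lemma degree_alpha_poly_eq_top_iff:
  "p \<ge> 1 \<Longrightarrow> degree (alpha_poly \<alpha> p X) = p \<longleftrightarrow> root_eval \<alpha> (X p) \<noteq> 0"
  by (auto simp: degree_alpha_poly_eq_iff)

section \<open>The space \<open>B\<^sub>Q\<close>\<close>

lemma B_Q_self: "\<forall>i. i \<notin> {1..p} \<longrightarrow> A i = 0 \<Longrightarrow> A \<in> B_Q g p A"
  by (simp add: B_Q_def)

lemma B_Q_regular_iff:
  assumes "p \<ge> 1" "A p \<in> t_reg g"
  shows "X \<in> B_Q g p A \<longleftrightarrow> (\<forall>i. i \<notin> {1..p} \<longrightarrow> X i = 0) \<and> X p \<in> t_reg g"
proof -
  have "degree (alpha_poly \<alpha> p X) = degree (alpha_poly \<alpha> p A) \<longleftrightarrow> root_eval \<alpha> (X p) \<noteq> 0"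
    if "\<alpha> \<in> roots g" for \<alpha>
  proof -
    have "degree (alpha_poly \<alpha> p A) = p"
      using assms that by (simp add: degree_alpha_poly_eq_top_iff t_reg_def)
    then show ?thesis
      by (metis degree_alpha_poly_eq_top_iff[OF assms(1)])
  qed
  then show ?thesis
    by (simp add: B_Q_def t_reg_def)
qed

lemma degree_alpha_poly_less:
  "p \<ge> 1 \<Longrightarrow> root_eval \<beta> (A p) = 0 \<Longrightarrow> degree (alpha_poly \<beta> p A) < p"
  using degree_alpha_poly_le[of \<beta> p A] degree_alpha_poly_eq_top_iff[of p \<beta> A] by linarith

lemma B_Q_singular_degree_iff:
  assumes p: "p \<ge> 1" and \<beta>: "\<beta> \<in> roots g" "root_eval \<beta> (A p) = 0" and Ap: "A p \<noteq> 0"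
  shows "X \<in> B_Q g p A \<longleftrightarrow> (\<forall>i. i \<notin> {1..p} \<longrightarrow> X i = 0) \<and> X p \<noteq> 0 \<and>
      degree (alpha_poly \<beta> p X) = degree (alpha_poly \<beta> p A)"
proof -
  have full: "degree (alpha_poly \<alpha> p Y) = p"
    if "fst \<alpha> * snd \<beta> \<noteq> snd \<alpha> * fst \<beta>" "Y p \<noteq> 0" "root_eval \<beta> (Y p) = 0" for \<alpha> Y
    using root_eval_independent_nonzero[OF that] by (simp add: degree_alpha_poly_eq_top_iff[OF p])
  show ?thesis
  proof
    assume X: "X \<in> B_Q g p A"
    obtain \<alpha> where \<alpha>: "\<alpha> \<in> roots g" "fst \<alpha> * snd \<beta> \<noteq> snd \<alpha> * fst \<beta>"
      using roots_ex_independent[OF \<beta>(1)] by blast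
    have "degree (alpha_poly \<alpha> p X) = p"
      using X full[of \<alpha> A] \<alpha> Ap \<beta>(2) by (simp add: B_Q_def)
    then have "X p \<noteq> 0"
      using p by (auto simp: degree_alpha_poly_eq_top_iff)
    with X \<beta>(1) show "(\<forall>i. i \<notin> {1..p} \<longrightarrow> X i = 0) \<and> X p \<noteq> 0 \<and>
        degree (alpha_poly \<beta> p X) = degree (alpha_poly \<beta> p A)"
      by (simp add: B_Q_def)
  next
    assume X: "(\<forall>i. i \<notin> {1..p} \<longrightarrow> X i = 0) \<and> X p \<noteq> 0 \<and>
        degree (alpha_poly \<beta> p X) = degree (alpha_poly \<beta> p A)"
    then have "degree (alpha_poly \<beta> p X) \<noteq> p"
      using degree_alpha_poly_less[of p \<beta> A] p \<beta>(2) by simp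
    then have "root_eval \<beta> (X p) = 0"
      using degree_alpha_poly_eq_top_iff[OF p] by blast
    then have "degree (alpha_poly \<alpha> p X) = degree (alpha_poly \<alpha> p A)" if "\<alpha> \<in> roots g" for \<alpha>
      using roots_proportional_cases[OF that \<beta>(1)] X full[of \<alpha> X] full[of \<alpha> A] Ap \<beta>(2)
      by (auto simp: alpha_poly_uminus)
    with X show "X \<in> B_Q g p A"
      by (simp add: B_Q_def)
  qed
qed

lemma B_Q_singular_iff:
  assumes "p \<ge> 1" "\<beta> \<in> roots g" "root_eval \<beta> (A p) = 0" "A p \<noteq> 0"
    and "d = degree (alpha_poly \<beta> p A)"
  shows "X \<in> B_Q g p A \<longleftrightarrow> (\<forall>i. i \<notin> {1..p} \<longrightarrow> X i = 0) \<and> X p \<noteq> 0 \<and>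
      (d = 0 \<or> root_eval \<beta> (X d) \<noteq> 0) \<and> (\<forall>i. d < i \<and> i \<le> p \<longrightarrow> root_eval \<beta> (X i) = 0)"
  using B_Q_singular_degree_iff[where p = p and A = A, OF assms(1-4)] degree_alpha_poly_less[of p \<beta> A] assms
  by (simp add: degree_alpha_poly_eq_iff)

lemma B_Q_regular_segment:
  assumes "p \<ge> 1" "A p \<in> t_reg g" "X \<in> B_Q g p A" "Z \<in> B_Q g p A" "Z p = X p"
  shows "(\<lambda>i. (1 - s) *\<^sub>R X i + s *\<^sub>R Z i) \<in> B_Q g p A"
  using assms by (simp add: B_Q_regular_iff algebra_simps)

lemma B_Q_singular_segment:
  assumes "p \<ge> 1" "\<beta> \<in> roots g" "root_eval \<beta> (A p) = 0" "A p \<noteq> 0"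
    and "d = degree (alpha_poly \<beta> p A)"
    and "X \<in> B_Q g p A" "Z \<in> B_Q g p A" "Z p = X p" "root_eval \<beta> (Z d) = root_eval \<beta> (X d)"
  shows "(\<lambda>i. (1 - s) *\<^sub>R X i + s *\<^sub>R Z i) \<in> B_Q g p A"
proof -
  have "root_eval \<beta> ((1 - s) *\<^sub>R X i + s *\<^sub>R Z i) =
      root_eval \<beta> (X i) + of_real s * (root_eval \<beta> (Z i) - root_eval \<beta> (X i))" for i
    by (simp add: root_eval_add root_eval_scaleR, simp add: algebra_simps)
  moreover have "(1 - s) *\<^sub>R X p + s *\<^sub>R Z p = X p"
    using assms(8) by (simp add: algebra_simps)
  ultimately show ?thesis
    using assms(6-9) by (simp add: B_Q_singular_iff[where p = p and A = A, OF assms(1-5)])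
qed

lemma Gamma_Q_regular:
  assumes p: "p \<ge> 1" and supp: "\<forall>i. i \<notin> {1..p} \<longrightarrow> A i = 0" and reg: "A p \<in> t_reg g"
  shows "Gamma_Q g p A \<cong> fundamental_group (t_reg g) (A p)"
  unfolding Gamma_Q_def
proof (rule fundamental_group_iso_fun_retraction[where F = "\<lambda>X. X p" and G = "\<lambda>z. A(p := z)",
      OF classifies_loops_path_class])
  note S = B_Q_regular_iff[where p = p and A = A, OF p reg]
  show "continuous_on (B_Q g p A) (\<lambda>X. X p)"
    by (rule continuous_on_product_then_coordinatewise[OF continuous_on_id])
  show "continuous_on (t_reg g) (\<lambda>z. A(p := z))"
    by (intro continuous_intros)
  show "(\<lambda>X. X p) \<in> B_Q g p A \<rightarrow> t_reg g" "(\<lambda>z. A(p := z)) \<in> t_reg g \<rightarrow> B_Q g p A"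
    using S supp p by auto
  show "(\<lambda>i. (1 - s) *\<^sub>R X i + s *\<^sub>R (A(p := X p)) i) \<in> B_Q g p A" if "X \<in> B_Q g p A" for X s
    using that S supp p by (intro B_Q_regular_segment[where p = p and A = A, OF p reg]) auto
qed simp_all

lemma B_Q_singular_leading:
  assumes "p \<ge> 1" "\<beta> \<in> roots g" "root_eval \<beta> (A p) = 0" "A p \<noteq> 0" "X \<in> B_Q g p A"
  shows "root_eval (root_perp \<beta>) (X p) \<noteq> 0"
    and "cscale (root_eval (root_perp \<beta>) (X p) / root_eval (root_perp \<beta>) (A p)) (A p) = X p"
proof -
  have "X p \<noteq> 0" "root_eval \<beta> (X p) = 0"
    using B_Q_singular_iff[where p = p and A = A, OF assms(1-4) refl] assms(1,3,5)
      degree_alpha_poly_less[of p \<beta> A] by auto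
  then show "root_eval (root_perp \<beta>) (X p) \<noteq> 0"
      "cscale (root_eval (root_perp \<beta>) (X p) / root_eval (root_perp \<beta>) (A p)) (A p) = X p"
    using root_perp_kernel_nonzero root_kernel_eq_cscale[symmetric] roots_nonzero[OF assms(2)] assms(3,4)
    by blast+
qed

lemma Gamma_Q_singular_degree_0:
  assumes p: "p \<ge> 1" and supp: "\<forall>i. i \<notin> {1..p} \<longrightarrow> A i = 0"
    and \<beta>: "\<beta> \<in> roots g" "root_eval \<beta> (A p) = 0" and Ap: "A p \<noteq> 0"
    and d: "degree (alpha_poly \<beta> p A) = 0"
  shows "Gamma_Q g p A \<cong> integer_group"
proof -
  let ?l = "root_eval (root_perp \<beta>)"
  define F where "F X = ?l (X p) / ?l (A p)" for X :: "nat \<Rightarrow> complex \<times> complex"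
  define G where "G w = A(p := cscale w (A p))" for w
  note S = B_Q_singular_iff[where p = p and A = A, OF p \<beta> Ap d[symmetric]]
  note leading = B_Q_singular_leading[where p = p and A = A, OF p \<beta> Ap]
  have lA: "?l (A p) \<noteq> 0"
    using leading(1)[OF B_Q_self[OF supp]] .
  have "\<forall>i. 0 < i \<and> i \<le> p \<longrightarrow> root_eval \<beta> (A i) = 0"
    using S B_Q_self[OF supp, of g] by blast
  then have G: "G \<in> -{0} \<rightarrow> B_Q g p A"
    using S supp p Ap \<beta>(2) by (auto simp: G_def cscale_eq_0_iff root_eval_cscale)
  have F: "F \<in> B_Q g p A \<rightarrow> -{0}"
    using leading(1) lA by (auto simp: F_def)
  show ?thesis
    unfolding Gamma_Q_def
  proof (rule fundamental_group_iso_fun_retraction[OF _ _ F _ G])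
    show "classifies_loops (-{0}) (F A) int_winding_number integer_group"
      using lA classifies_loops_int_winding_number by (simp add: F_def)
    show "continuous_on (B_Q g p A) F" "continuous_on (-{0}) G"
      unfolding F_def G_def using lA by (intro continuous_intros; simp)+
    show "F (G w) = w" "G (F A) = A" for w
      using lA by (simp_all add: F_def G_def root_eval_cscale)
    show "(\<lambda>i. (1 - s) *\<^sub>R X i + s *\<^sub>R G (F X) i) \<in> B_Q g p A" if X: "X \<in> B_Q g p A" for X s
    proof (rule B_Q_singular_segment[OF p \<beta> Ap d[symmetric] X])
      show "G (F X) \<in> B_Q g p A"
        using F G X by blast
      show "G (F X) p = X p"
        using leading(2)[OF X] by (simp add: F_def G_def)
      show "root_eval \<beta> (G (F X) 0) = root_eval \<beta> (X 0)"
        using X S p by (simp add: G_def supp)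
    qed
  qed
qed

lemma Gamma_Q_singular_degree_pos:
  assumes p: "p \<ge> 1" and supp: "\<forall>i. i \<notin> {1..p} \<longrightarrow> A i = 0"
    and \<beta>: "\<beta> \<in> roots g" "root_eval \<beta> (A p) = 0" and Ap: "A p \<noteq> 0"
    and d: "degree (alpha_poly \<beta> p A) = d" "d \<noteq> 0"
  shows "Gamma_Q g p A \<cong> integer_group \<times>\<times> integer_group"
proof -
  let ?l = "root_eval (root_perp \<beta>)"
  define F where "F X = (?l (X p) / ?l (A p), root_eval \<beta> (X d) / root_eval \<beta> (A d))"
    for X :: "nat \<Rightarrow> complex \<times> complex"
  define G where "G y = A(p := cscale (fst y) (A p), d := cscale (snd y) (A d))" for y
  note S = B_Q_singular_iff[where p = p and A = A, OF p \<beta> Ap d(1)[symmetric]]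
  note leading = B_Q_singular_leading[where p = p and A = A, OF p \<beta> Ap]
  have dp: "d < p"
    using degree_alpha_poly_less[of p \<beta> A] p \<beta>(2) d(1) by simp
  have lA: "?l (A p) \<noteq> 0"
    using leading(1)[OF B_Q_self[OF supp]] .
  have A: "root_eval \<beta> (A d) \<noteq> 0" "\<forall>i. d < i \<and> i \<le> p \<longrightarrow> root_eval \<beta> (A i) = 0"
    using S B_Q_self[OF supp, of g] d(2) by blast+
  have G: "G \<in> (-{0}) \<times> (-{0}) \<rightarrow> B_Q g p A"
    using S supp p dp d(2) A Ap \<beta>(2)
    by (auto simp: G_def cscale_eq_0_iff root_eval_cscale split: if_splits)
  have F: "F \<in> B_Q g p A \<rightarrow> (-{0}) \<times> (-{0})"
    using S d(2) leading(1) lA A(1) by (auto simp: F_def)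
  show ?thesis
    unfolding Gamma_Q_def
  proof (rule fundamental_group_iso_fun_retraction[OF _ _ F _ G])
    show "classifies_loops ((-{0}) \<times> (-{0})) (F A)
        (\<lambda>\<delta>. (int_winding_number (fst \<circ> \<delta>), int_winding_number (snd \<circ> \<delta>)))
        (integer_group \<times>\<times> integer_group)"
      using lA A(1) classifies_loops_Times[OF classifies_loops_int_winding_number
          classifies_loops_int_winding_number] by (simp add: F_def)
    show "continuous_on (B_Q g p A) F" "continuous_on ((-{0}) \<times> (-{0})) G"
      unfolding F_def G_def using lA A(1) by (intro continuous_intros; simp)+
    show "F (G y) = y" "G (F A) = A" for y
      using lA A(1) dp by (simp_all add: F_def G_def root_eval_cscale)
    show "(\<lambda>i. (1 - s) *\<^sub>R X i + s *\<^sub>R G (F X) i) \<in> B_Q g p A" if X: "X \<in> B_Q g p A" for X s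
    proof (rule B_Q_singular_segment[OF p \<beta> Ap d(1)[symmetric] X])
      show "G (F X) \<in> B_Q g p A"
        using F G X by blast
      show "G (F X) p = X p"
        using leading(2)[OF X] dp by (simp add: F_def G_def)
      show "root_eval \<beta> (G (F X) d) = root_eval \<beta> (X d)"
        using A(1) by (simp add: F_def G_def root_eval_cscale)
    qed
  qed
qed

theorem corollary5p8:
  fixes g :: rank2_type and p :: nat and A :: "nat \<Rightarrow> complex \<times> complex"
  assumes "p \<ge> 1"
    and "\<forall>i. i \<notin> {1..p} \<longrightarrow> A i = 0"
    and "A p \<noteq> 0"
  shows "Gamma_Q g p A \<cong> integer_group
       \<or> Gamma_Q g p A \<cong> DirProd integer_group integer_group
       \<or> (\<exists>b\<in>t_reg g. Gamma_Q g p A \<cong> fundamental_group (t_reg g) b)"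
proof (cases "A p \<in> t_reg g")
  case True
  then show ?thesis
    using Gamma_Q_regular[OF assms(1,2) True] by blast
next
  case False
  then obtain \<beta> where \<beta>: "\<beta> \<in> roots g" "root_eval \<beta> (A p) = 0"
    by (auto simp: t_reg_def)
  show ?thesis
  proof (cases "degree (alpha_poly \<beta> p A) = 0")
    case True
    then show ?thesis
      using Gamma_Q_singular_degree_0[OF assms(1,2) \<beta> assms(3)] by blast
  next
    case False
    then show ?thesis
      using Gamma_Q_singular_degree_pos[OF assms(1,2) \<beta> assms(3) refl] by blast
  qed
qed

end
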